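(* Let $w\in\mathbb{R}^n$, $w\ge0$. The following statements are equivalent: (a) $w$ is strongly bilevel feasible; (b) $\{w\}$ is a reaction set; (c) $\mathbf{W}(\mathbf{T}(w))=\{w\}$; (d) $(w,g(w))$ is an extreme point of $\operatorname{epi}(g)$; (e) $\dim\mathbf{T}(w)=n$.
   Context: Single-commodity network pricing setting: $G=(\mathcal{V},\mathcal{A})$ directed graph, arc costs $c\ge0$, nonempty tolled arc set $\mathcal{A}_1\subsetneq\mathcal{A}$, $n=|\mathcal{A}_1|$, $N$ node–arc incidence matrix, single origin $o$ and destination $d$ connected by a toll-free path, $b_o=1$, $b_d=-1$, $b_i=0$ otherwise, $\mathcal{X}=\{x\in\mathbb{R}^{\mathcal{A}}: Nx=b,\ x\ge0\}$, $x_{\mathcal{A}_1}$ the restriction of $x$ to $\mathcal{A}_1$; tolls $t\in\mathbb{R}^n$ are extended by zeros to $\bar t\in\mathbb{R}^{\mathcal{A}}$. Let $f(t)=\min\{c^\top x+t^\top x_{\mathcal{A}_1}: x\in\mathcal{X}\}$ for $t\ge0$, $f(t)=-\infty$ otherwise, and $g(w)=\sup_{t\in\mathbb{R}^n}\{f(t)-t^\top w\}$. A reaction set is a set $W=\{w:(w,z)\in F\text{ for some }z\}$ where $F$ is a face of $\operatorname{epi}(g)$ whose affine hull's direction space does not contain $(0,1)$. A vector $w\ge0$ is strongly bilevel feasible when $\{w\}$ is a reaction set. For $t\ge0$, $\mathbf{W}(t)$ is the set of $w$ such that $(w,x)$ is optimal for some $x$ in $\min_{w,x}\{c^\top x+t^\top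 w: x_{\mathcal{A}_1}\le w,\ Nx=b,\ w\ge0,\ x\ge0\}$, and for a set $T$, $\mathbf{W}(T)=\bigcap_{t\in T}\mathbf{W}(t)$. For $w\ge0$, $\mathbf{T}(w)$ is the set of $t$ that are parts of optimal solutions $(t,y)$ of $\max_{t,y}\{b^\top y-w^\top t: N^\top y-\bar t\le c,\ t\ge0\}$. *)

theory Defs
  imports "HOL-Analysis.Analysis" "HOL-Library.Extended_Real"
begin

text \<open>
  Arcs are of type 'k + 'f: Inl k are the tolled arcs (the set A1, indexed by the finite
  type 'k, so n = CARD('k)), Inr f are the toll-free arcs.
\<close>

definition node_supply :: "'v \<Rightarrow> 'v \<Rightarrow> 'v \<Rightarrow> real" where
  "node_supply orig dst i = (if i = orig then 1 else if i = dst then -1 else 0)"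

definition flow_conservation ::
  "('k::finite + 'f::finite \<Rightarrow> 'v::finite) \<Rightarrow> ('k + 'f \<Rightarrow> 'v) \<Rightarrow> 'v \<Rightarrow> 'v \<Rightarrow> ('k + 'f \<Rightarrow> real) \<Rightarrow> bool" where
  "flow_conservation tail head orig dst x \<longleftrightarrow>
     (\<forall>i. (\<Sum>e\<in>{e. tail e = i}. x e) - (\<Sum>e\<in>{e. head e = i}. x e) = node_supply orig dst i)"

definition Xset ::
  "('k::finite + 'f::finite \<Rightarrow> 'v::finite) \<Rightarrow> ('k + 'f \<Rightarrow> 'v) \<Rightarrow> 'v \<Rightarrow> 'v \<Rightarrow> ('k + 'f \<Rightarrow> real) set" where
  "Xset tail head orig dst = {x. flow_conservation tail head orig dst x \<and> (\<forall>e. 0 \<le> x e)}"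

definition restrA1 :: "('k::finite + 'f \<Rightarrow> real) \<Rightarrow> real^'k" where
  "restrA1 x = (\<chi> k. x (Inl k))"

definition ext_toll :: "real^'k \<Rightarrow> ('k + 'f \<Rightarrow> real)" where
  "ext_toll t e = (case e of Inl k \<Rightarrow> t $ k | Inr _ \<Rightarrow> 0)"

definition arc_cost :: "('k::finite + 'f::finite \<Rightarrow> real) \<Rightarrow> ('k + 'f \<Rightarrow> real) \<Rightarrow> real" where
  "arc_cost c x = (\<Sum>e\<in>UNIV. c e * x e)"

definition nonneg_vec :: "real^'k \<Rightarrow> bool" where
  "nonneg_vec v \<longleftrightarrow> (\<forall>k. 0 \<le> v $ k)"

definition fval ::
  "('k::finite + 'f::finite \<Rightarrow> 'v::finite) \<Rightarrow> ('k + 'f \<Rightarrow> 'v) \<Rightarrow> 'v \<Rightarrow> 'v \<Rightarrow> ('k + 'f \<Rightarrow> real)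
   \<Rightarrow> real^'k \<Rightarrow> ereal" where
  "fval tail head orig dst c t =
     (if nonneg_vec t
      then Inf ((\<lambda>x. ereal (arc_cost c x + t \<bullet> restrA1 x)) ` Xset tail head orig dst)
      else -\<infinity>)"

definition gval ::
  "('k::finite + 'f::finite \<Rightarrow> 'v::finite) \<Rightarrow> ('k + 'f \<Rightarrow> 'v) \<Rightarrow> 'v \<Rightarrow> 'v \<Rightarrow> ('k + 'f \<Rightarrow> real)
   \<Rightarrow> real^'k \<Rightarrow> ereal" where
  "gval tail head orig dst c w = (SUP t. fval tail head orig dst c t - ereal (t \<bullet> w))"

definition epi_g ::
  "('k::finite + 'f::finite \<Rightarrow> 'v::finite) \<Rightarrow> ('k + 'f \<Rightarrow> 'v) \<Rightarrow> 'v \<Rightarrow> 'v \<Rightarrow> ('k + 'f \<Rightarrow> real)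
   \<Rightarrow> ((real^'k) \<times> real) set" where
  "epi_g tail head orig dst c = {(w, z). gval tail head orig dst c w \<le> ereal z}"

definition aff_direction :: "('a::real_vector) set \<Rightarrow> 'a set" where
  "aff_direction F = span {p - q | p q. p \<in> F \<and> q \<in> F}"

definition reaction_set ::
  "('k::finite + 'f::finite \<Rightarrow> 'v::finite) \<Rightarrow> ('k + 'f \<Rightarrow> 'v) \<Rightarrow> 'v \<Rightarrow> 'v \<Rightarrow> ('k + 'f \<Rightarrow> real)
   \<Rightarrow> (real^'k) set \<Rightarrow> bool" where
  "reaction_set tail head orig dst c W \<longleftrightarrow>
     (\<exists>F. F face_of epi_g tail head orig dst c \<and> (0, 1) \<notin> aff_direction F \<and> W = fst ` F)"

definition strongly_bilevel_feasible ::
  "('k::finite + 'f::finite \<Rightarrow> 'v::finite) \<Rightarrow> ('k + 'f \<Rightarrow> 'v) \<Rightarrow> 'v \<Rightarrow> 'v \<Rightarrow> ('k + 'f \<Rightarrow> real)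
   \<Rightarrow> real^'k \<Rightarrow> bool" where
  "strongly_bilevel_feasible tail head orig dst c w \<longleftrightarrow>
     nonneg_vec w \<and> reaction_set tail head orig dst c {w}"

definition lower_feasible ::
  "('k::finite + 'f::finite \<Rightarrow> 'v::finite) \<Rightarrow> ('k + 'f \<Rightarrow> 'v) \<Rightarrow> 'v \<Rightarrow> 'v
   \<Rightarrow> ((real^'k) \<times> ('k + 'f \<Rightarrow> real)) set" where
  "lower_feasible tail head orig dst =
     {(w, x). x \<in> Xset tail head orig dst \<and> (\<forall>k. x (Inl k) \<le> w $ k) \<and> nonneg_vec w}"

definition bW ::
  "('k::finite + 'f::finite \<Rightarrow> 'v::finite) \<Rightarrow> ('k + 'f \<Rightarrow> 'v) \<Rightarrow> 'v \<Rightarrow> 'v \<Rightarrow> ('k + 'f \<Rightarrow> real)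
   \<Rightarrow> real^'k \<Rightarrow> (real^'k) set" where
  "bW tail head orig dst c t =
     {w. \<exists>x. (w, x) \<in> lower_feasible tail head orig dst \<and>
            (\<forall>(w', x') \<in> lower_feasible tail head orig dst.
                arc_cost c x + t \<bullet> w \<le> arc_cost c x' + t \<bullet> w')}"

definition bW_set ::
  "('k::finite + 'f::finite \<Rightarrow> 'v::finite) \<Rightarrow> ('k + 'f \<Rightarrow> 'v) \<Rightarrow> 'v \<Rightarrow> 'v \<Rightarrow> ('k + 'f \<Rightarrow> real)
   \<Rightarrow> (real^'k) set \<Rightarrow> (real^'k) set" where
  "bW_set tail head orig dst c T = (\<Inter>t\<in>T. bW tail head orig dst c t)"

definition dual_feasible ::
  "('k::finite + 'f::finite \<Rightarrow> 'v::finite) \<Rightarrow> ('k + 'f \<Rightarrow> 'v) \<Rightarrow> ('k + 'f \<Rightarrow> real)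
   \<Rightarrow> ((real^'k) \<times> ('v \<Rightarrow> real)) set" where
  "dual_feasible tail head c =
     {(t, y). (\<forall>e. y (tail e) - y (head e) - ext_toll t e \<le> c e) \<and> nonneg_vec t}"

definition dual_obj :: "'v::finite \<Rightarrow> 'v \<Rightarrow> real^'k \<Rightarrow> real^'k \<Rightarrow> ('v \<Rightarrow> real) \<Rightarrow> real" where
  "dual_obj orig dst w t y = (\<Sum>i\<in>UNIV. node_supply orig dst i * y i) - w \<bullet> t"

definition bT ::
  "('k::finite + 'f::finite \<Rightarrow> 'v::finite) \<Rightarrow> ('k + 'f \<Rightarrow> 'v) \<Rightarrow> 'v \<Rightarrow> 'v \<Rightarrow> ('k + 'f \<Rightarrow> real)
   \<Rightarrow> real^'k \<Rightarrow> (real^'k) set" where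
  "bT tail head orig dst c w =
     {t. \<exists>y. (t, y) \<in> dual_feasible tail head c \<and>
            (\<forall>(t', y') \<in> dual_feasible tail head c.
                dual_obj orig dst w t' y' \<le> dual_obj orig dst w t y)}"

end

theory Submission
  imports Defs
begin

text \<open>
  Let \<open>G(w)\<close> be the optimal cost of the lower-level problem with capacities \<open>w \<ge> 0\<close>.
  LP duality, obtained from Farkas' lemma (a finitely generated cone is closed, so a point
  outside it can be separated from it), shows that \<open>G(w)\<close> is attained, that \<open>g = G\<close> on
  \<open>w \<ge> 0\<close> and \<open>g = \<infinity>\<close> elsewhere, and that \<open>\<^bold>T(w)\<close> is the set of optimal dual tolls.
  Every \<open>t \<in> \<^bold>T(w)\<close> yields an affine minorant \<open>G(w) - t \<bullet> (w' - w)\<close> of \<open>G\<close> that is tight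
  at \<open>w\<close>, and \<open>w' \<in> \<^bold>W(t)\<close> iff it is also tight at \<open>w'\<close>.

  (b) \<open>\<longleftrightarrow>\<close> (d) holds for faces of any epigraph: a face projecting to a point and not containing
  a vertical direction is a single point. (c) \<open>\<Longrightarrow>\<close> (d): if \<open>(w, G(w))\<close> is interior to a
  segment of \<open>epi g\<close>, all these minorants are tight at both endpoints, which therefore lie over
  \<open>\<^bold>W(\<^bold>T(w)) = {w}\<close> and coincide. (d) \<open>\<Longrightarrow>\<close> (e): if \<open>\<^bold>T(w)\<close> lies in a hyperplane
  \<open>d \<bullet> t = \<beta>\<close>, a second LP (sensitivity along \<open>d\<close>) gives \<open>G(w + s d) \<le> G(w) - \<beta> s\<close> for some
  \<open>s > 0\<close>, and likewise along \<open>-d\<close>, so \<open>(w, G(w))\<close> is interior to a segment of \<open>epi g\<close>.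
  (e) \<open>\<Longrightarrow>\<close> (c): a second point \<open>w' \<in> \<^bold>W(\<^bold>T(w))\<close> would confine \<open>\<^bold>T(w)\<close> to the hyperplane
  \<open>(w' - w) \<bullet> t = G(w) - G(w')\<close>.
\<close>

section \<open>Farkas lemma and linear programming duality\<close>

lemma farkas_convex_cone_hull:
  fixes z :: "'a::euclidean_space"
  assumes "finite S" and "z \<notin> convex_cone hull S"
  obtains a where "\<forall>s\<in>S. 0 \<le> a \<bullet> s" and "a \<bullet> z < 0"
proof -
  let ?K = "convex_cone hull S"
  obtain a \<beta> where az: "a \<bullet> z < \<beta>" and aK: "\<forall>x\<in>?K. \<beta> < a \<bullet> x"
    using separating_hyperplane_closed_point[of ?K z] assms
    by (auto simp: closed_convex_cone_hull convex_convex_cone_hull)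
  have \<beta>: "\<beta> < 0"
    using aK convex_cone_hull_contains_0 by fastforce
  have "0 \<le> a \<bullet> x" if "x \<in> ?K" for x
  proof (rule ccontr)
    assume "\<not> 0 \<le> a \<bullet> x"
    then have "(\<beta> / (a \<bullet> x)) *\<^sub>R x \<in> ?K"
      using \<beta> that by (intro convex_cone_hull_mul) (auto simp: divide_nonpos_neg)
    with aK \<open>\<not> 0 \<le> a \<bullet> x\<close> show False by fastforce
  qed
  then show thesis
    using that az \<beta> by (meson hull_inc less_trans)
qed

lemma convex_cone_nonneg_combinations:
  fixes q :: "'i \<Rightarrow> 'a::real_vector"
  shows "convex_cone {(\<Sum>i\<in>I. u i *\<^sub>R q i) | u. \<forall>i\<in>I. 0 \<le> u i}"
  unfolding convex_cone_iff
proof (intro conjI ballI allI impI)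
  show "0 \<in> {(\<Sum>i\<in>I. u i *\<^sub>R q i) | u. \<forall>i\<in>I. 0 \<le> u i}"
    by (intro CollectI exI[of _ "\<lambda>i. 0"]) simp
next
  fix x y assume "x \<in> {(\<Sum>i\<in>I. u i *\<^sub>R q i) | u. \<forall>i\<in>I. 0 \<le> u i}"
    and "y \<in> {(\<Sum>i\<in>I. u i *\<^sub>R q i) | u. \<forall>i\<in>I. 0 \<le> u i}"
  then obtain u v where "\<forall>i\<in>I. 0 \<le> u i" "\<forall>i\<in>I. 0 \<le> v i"
    and "x = (\<Sum>i\<in>I. u i *\<^sub>R q i)" "y = (\<Sum>i\<in>I. v i *\<^sub>R q i)"
    by blast
  then show "x + y \<in> {(\<Sum>i\<in>I. u i *\<^sub>R q i) | u. \<forall>i\<in>I. 0 \<le> u i}"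
    by (intro CollectI exI[of _ "\<lambda>i. u i + v i"]) (simp add: scaleR_add_left sum.distrib)
next
  fix x and r :: real assume "x \<in> {(\<Sum>i\<in>I. u i *\<^sub>R q i) | u. \<forall>i\<in>I. 0 \<le> u i}" and "0 \<le> r"
  then obtain u where "\<forall>i\<in>I. 0 \<le> u i" and "x = (\<Sum>i\<in>I. u i *\<^sub>R q i)"
    by blast
  with \<open>0 \<le> r\<close> show "r *\<^sub>R x \<in> {(\<Sum>i\<in>I. u i *\<^sub>R q i) | u. \<forall>i\<in>I. 0 \<le> u i}"
    by (intro CollectI exI[of _ "\<lambda>i. r * u i"]) (simp add: scaleR_sum_right)
qed

lemma farkas_nonneg_combinations:
  fixes q :: "'i \<Rightarrow> 'a::euclidean_space"
  assumes "finite I" and "\<nexists>u. (\<forall>i\<in>I. 0 \<le> u i) \<and> z = (\<Sum>i\<in>I. u i *\<^sub>R q i)"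
  obtains a where "\<forall>i\<in>I. 0 \<le> a \<bullet> q i" and "a \<bullet> z < 0"
proof -
  have "q j \<in> {(\<Sum>i\<in>I. u i *\<^sub>R q i) | u. \<forall>i\<in>I. 0 \<le> u i}" if "j \<in> I" for j
    using that \<open>finite I\<close>
    by (intro CollectI exI[of _ "\<lambda>i. if i = j then 1 else 0"])
      (simp add: if_distrib[of "\<lambda>c. c *\<^sub>R _"] cong: if_cong)
  then have "convex_cone hull (q ` I) \<subseteq> {(\<Sum>i\<in>I. u i *\<^sub>R q i) | u. \<forall>i\<in>I. 0 \<le> u i}"
    by (intro hull_minimal convex_cone_nonneg_combinations) blast
  with assms(2) have "z \<notin> convex_cone hull (q ` I)"
    by blast
  with \<open>finite I\<close> obtain a where "\<forall>s\<in>q ` I. 0 \<le> a \<bullet> s" "a \<bullet> z < 0"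
    by (metis farkas_convex_cone_hull finite_imageI)
  with that show thesis
    by blast
qed

lemma sum_insert_None:
  "finite I \<Longrightarrow> (\<Sum>j\<in>insert None (Some ` I). f j) = f None + (\<Sum>i\<in>I. f (Some i))"
  by (simp add: sum.reindex)

text \<open>Farkas' lemma for the cone generated by the rows \<open>(p i, b i)\<close> and by \<open>(0, -1)\<close>.\<close>

lemma affine_farkas_alternative:
  fixes p :: "'i \<Rightarrow> 'a::euclidean_space"
  assumes "finite I"
    and "\<nexists>u \<mu>. (\<forall>i\<in>I. 0 \<le> u i) \<and> 0 \<le> \<mu> \<and> z = (\<Sum>i\<in>I. u i *\<^sub>R p i)
                 \<and> \<zeta> = (\<Sum>i\<in>I. u i * b i) - \<mu>"
  obtains y s where "s \<le> 0" and "\<forall>i\<in>I. 0 \<le> y \<bullet> p i + s * b i" and "y \<bullet> z + s * \<zeta> < 0"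
proof -
  define q where "q = case_option (0, -1) (\<lambda>i. (p i, b i))"
  have "\<nexists>u. (\<forall>j\<in>insert None (Some ` I). 0 \<le> u j) \<and> (z, \<zeta>) = (\<Sum>j\<in>insert None (Some ` I). u j *\<^sub>R q j)"
  proof
    assume "\<exists>u. (\<forall>j\<in>insert None (Some ` I). 0 \<le> u j) \<and> (z, \<zeta>) = (\<Sum>j\<in>insert None (Some ` I). u j *\<^sub>R q j)"
    then obtain u where u: "\<forall>j\<in>insert None (Some ` I). 0 \<le> u j"
      and "(z, \<zeta>) = (\<Sum>j\<in>insert None (Some ` I). u j *\<^sub>R q j)"
      by blast
    then have "(z, \<zeta>) = (\<Sum>i\<in>I. u (Some i) *\<^sub>R p i, (\<Sum>i\<in>I. u (Some i) * b i) - u None)"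
      by (simp add: sum_insert_None[OF \<open>finite I\<close>] q_def fst_sum snd_sum prod_eq_iff)
    with u have "\<exists>v \<mu>. (\<forall>i\<in>I. 0 \<le> v i) \<and> 0 \<le> \<mu> \<and> z = (\<Sum>i\<in>I. v i *\<^sub>R p i)
                 \<and> \<zeta> = (\<Sum>i\<in>I. v i * b i) - \<mu>"
      by (intro exI[of _ "\<lambda>i. u (Some i)"] exI[of _ "u None"]) simp
    with assms(2) show False ..
  qed
  then obtain a where a: "\<forall>j\<in>insert None (Some ` I). 0 \<le> a \<bullet> q j" "a \<bullet> (z, \<zeta>) < 0"
    using farkas_nonneg_combinations[of "insert None (Some ` I)"] \<open>finite I\<close> by blast
  obtain y s where "a = (y, s)"
    by fastforce
  with a show thesis
    by (intro that[of s y]) (auto simp: q_def mult.commute)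
qed

lemma nonneg_combination_le:
  assumes "\<forall>i\<in>I. b i \<le> p i \<bullet> x" and "\<forall>i\<in>I. 0 \<le> u i"
  shows "(\<Sum>i\<in>I. u i * b i) \<le> (\<Sum>i\<in>I. u i *\<^sub>R p i) \<bullet> x"
  unfolding inner_sum_left inner_scaleR_left
  using assms by (intro sum_mono mult_left_mono) auto

lemma feasible_scaled_separator:
  assumes "s < 0" and "\<forall>i\<in>I. 0 \<le> y \<bullet> p i + s * b i"
  shows "\<forall>i\<in>I. b i \<le> p i \<bullet> ((- 1 / s) *\<^sub>R y)"
proof
  fix i assume "i \<in> I"
  with assms have "- s * b i \<le> y \<bullet> p i" by force
  with \<open>s < 0\<close> show "b i \<le> p i \<bullet> ((- 1 / s) *\<^sub>R y)"
    by (simp add: field_simps inner_commute)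
qed

lemma infeasible_system_certificate:
  fixes p :: "'i \<Rightarrow> 'a::euclidean_space"
  assumes "finite I" and "\<nexists>x. \<forall>i\<in>I. b i \<le> p i \<bullet> x"
  obtains u where "\<forall>i\<in>I. 0 \<le> u i" and "(\<Sum>i\<in>I. u i *\<^sub>R p i) = 0" and "1 \<le> (\<Sum>i\<in>I. u i * b i)"
proof -
  have "\<exists>u \<mu>. (\<forall>i\<in>I. 0 \<le> u i) \<and> 0 \<le> \<mu> \<and> 0 = (\<Sum>i\<in>I. u i *\<^sub>R p i)
              \<and> 1 = (\<Sum>i\<in>I. u i * b i) - \<mu>"
  proof (rule ccontr)
    assume "\<not> ?thesis"
    then obtain y s where "s \<le> 0" and ys: "\<forall>i\<in>I. 0 \<le> y \<bullet> p i + s * b i" and "y \<bullet> 0 + s * 1 < 0"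
      by (rule affine_farkas_alternative[OF \<open>finite I\<close>])
    then have "s < 0" by simp
    from feasible_scaled_separator[OF this ys] assms(2) show False by blast
  qed
  then obtain u \<mu> where "\<forall>i\<in>I. 0 \<le> u i" "0 \<le> \<mu>" "0 = (\<Sum>i\<in>I. u i *\<^sub>R p i)"
    "1 = (\<Sum>i\<in>I. u i * b i) - \<mu>" by blast
  then show thesis
    by (intro that[of u]) auto
qed

lemma affine_farkas:
  fixes p :: "'i \<Rightarrow> 'a::euclidean_space"
  assumes "finite I" and "\<forall>i\<in>I. b i \<le> p i \<bullet> x0"
    and "\<forall>x. (\<forall>i\<in>I. b i \<le> p i \<bullet> x) \<longrightarrow> m \<le> cc \<bullet> x"
  obtains u where "\<forall>i\<in>I. 0 \<le> u i" and "cc = (\<Sum>i\<in>I. u i *\<^sub>R p i)" and "m \<le> (\<Sum>i\<in>I. u i * b i)"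
proof -
  have "\<exists>u \<mu>. (\<forall>i\<in>I. 0 \<le> u i) \<and> 0 \<le> \<mu> \<and> cc = (\<Sum>i\<in>I. u i *\<^sub>R p i)
              \<and> m = (\<Sum>i\<in>I. u i * b i) - \<mu>"
  proof (rule ccontr)
    assume "\<not> ?thesis"
    then obtain y s where ys: "s \<le> 0" "\<forall>i\<in>I. 0 \<le> y \<bullet> p i + s * b i" "y \<bullet> cc + s * m < 0"
      by (rule affine_farkas_alternative[OF \<open>finite I\<close>])
    show False
    proof (cases "s = 0")
      case True
      \<comment> \<open>then \<open>y\<close> is a recession direction along which \<open>cc\<close> decreases without bound\<close>
      with ys have yp: "\<forall>i\<in>I. 0 \<le> y \<bullet> p i" and yc: "y \<bullet> cc < 0" by auto
      define r where "r = (cc \<bullet> x0 - m + 1) / - (y \<bullet> cc)"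
      have "m \<le> cc \<bullet> x0" using assms(2,3) by blast
      with yc have r: "0 \<le> r" "r * (y \<bullet> cc) = - (cc \<bullet> x0 - m + 1)"
        unfolding r_def by (auto intro: divide_nonneg_neg)
      have "b i \<le> p i \<bullet> (x0 + r *\<^sub>R y)" if "i \<in> I" for i
      proof -
        have "b i \<le> p i \<bullet> x0" "0 \<le> r * (y \<bullet> p i)" using that assms(2) yp r(1) by auto
        then show ?thesis by (simp add: inner_add_right inner_commute[of y])
      qed
      then have "m \<le> cc \<bullet> (x0 + r *\<^sub>R y)"
        using assms(3) by blast
      then have "m \<le> cc \<bullet> x0 + r * (y \<bullet> cc)"
        by (simp add: inner_add_right inner_commute[of y])
      with r(2) show False by simp
    next
      case False
      with ys(1) have "s < 0" by simp
      from feasible_scaled_separator[OF this ys(2)] assms(3)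
      have "m \<le> cc \<bullet> ((- 1 / s) *\<^sub>R y)" by blast
      with ys(3) \<open>s < 0\<close> show False
        by (simp add: field_simps inner_commute)
    qed
  qed
  then obtain u \<mu> where "\<forall>i\<in>I. 0 \<le> u i" "0 \<le> \<mu>" "cc = (\<Sum>i\<in>I. u i *\<^sub>R p i)"
    "m = (\<Sum>i\<in>I. u i * b i) - \<mu>" by blast
  then show thesis
    by (intro that[of u]) auto
qed

lemma lp_min_attained:
  fixes p :: "'i \<Rightarrow> 'a::euclidean_space"
  assumes "finite I" and "\<forall>i\<in>I. b i \<le> p i \<bullet> x0"
    and "\<forall>x. (\<forall>i\<in>I. b i \<le> p i \<bullet> x) \<longrightarrow> m \<le> cc \<bullet> x"
  obtains x where "\<forall>i\<in>I. b i \<le> p i \<bullet> x" and "\<forall>x'. (\<forall>i\<in>I. b i \<le> p i \<bullet> x') \<longrightarrow> cc \<bullet> x \<le> cc \<bullet> x'"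
proof -
  define F where "F = {x. \<forall>i\<in>I. b i \<le> p i \<bullet> x}"
  define v where "v = Inf ((\<lambda>x. cc \<bullet> x) ` F)"
  have "x0 \<in> F"
    using assms(2) by (simp add: F_def)
  have v_le: "v \<le> cc \<bullet> x" if "x \<in> F" for x
    unfolding v_def using that
  proof (rule cInf_lower[OF imageI])
    show "bdd_below ((\<lambda>x. cc \<bullet> x) ` F)"
      using assms(3) by (auto simp: F_def bdd_below_def)
  qed
  \<comment> \<open>\<open>F\<close> extended by the row \<open>cc \<bullet> x \<le> v\<close> (index \<open>None\<close>) is feasible, since a certificate of
     infeasibility would give a lower bound on \<open>cc\<close> over \<open>F\<close> exceeding \<open>v\<close>\<close>
  define p' where "p' = case_option (- cc) p"
  define b' where "b' = case_option (- v) b"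
  have "\<exists>x. \<forall>j\<in>insert None (Some ` I). b' j \<le> p' j \<bullet> x"
  proof (rule ccontr)
    assume "\<nexists>x. \<forall>j\<in>insert None (Some ` I). b' j \<le> p' j \<bullet> x"
    then obtain \<kappa> where \<kappa>: "\<forall>j\<in>insert None (Some ` I). 0 \<le> \<kappa> j"
      "(\<Sum>j\<in>insert None (Some ` I). \<kappa> j *\<^sub>R p' j) = 0" "1 \<le> (\<Sum>j\<in>insert None (Some ` I). \<kappa> j * b' j)"
      using infeasible_system_certificate[of "insert None (Some ` I)" b' p'] assms(1) by auto
    have gap: "1 \<le> \<kappa> None * (cc \<bullet> x - v)" if "x \<in> F" for x
    proof -
      have "(\<Sum>i\<in>I. \<kappa> (Some i) * b i) \<le> (\<Sum>i\<in>I. \<kappa> (Some i) *\<^sub>R p i) \<bullet> x"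
        using nonneg_combination_le[of I b p x "\<lambda>i. \<kappa> (Some i)"] that \<kappa>(1) by (simp add: F_def)
      also have "(\<Sum>i\<in>I. \<kappa> (Some i) *\<^sub>R p i) = \<kappa> None *\<^sub>R cc"
        using \<kappa>(2) by (simp add: sum_insert_None[OF assms(1)] p'_def algebra_simps)
      finally show ?thesis
        using \<kappa>(3) by (simp add: sum_insert_None[OF assms(1)] b'_def algebra_simps)
    qed
    have "0 < \<kappa> None"
      using gap[OF \<open>x0 \<in> F\<close>] \<kappa>(1) by (cases "\<kappa> None = 0") auto
    then have "v + 1 / \<kappa> None \<le> cc \<bullet> x" if "x \<in> F" for x
      using gap[OF that] by (simp add: field_simps)
    then have "v + 1 / \<kappa> None \<le> v"
      unfolding v_def using \<open>x0 \<in> F\<close> by (intro cInf_greatest) auto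
    moreover have "0 < 1 / \<kappa> None"
      using \<open>0 < \<kappa> None\<close> by simp
    ultimately show False
      by linarith
  qed
  then obtain x where "x \<in> F" "cc \<bullet> x \<le> v"
    by (auto simp: p'_def b'_def F_def)
  with v_le show thesis
    by (intro that) (auto simp: F_def intro: order.trans)
qed

lemma lp_strong_duality:
  fixes p :: "'i \<Rightarrow> 'a::euclidean_space"
  assumes "finite I" and "\<forall>i\<in>I. b i \<le> p i \<bullet> x0"
    and "\<forall>x. (\<forall>i\<in>I. b i \<le> p i \<bullet> x) \<longrightarrow> m \<le> cc \<bullet> x"
  obtains x u where "\<forall>i\<in>I. b i \<le> p i \<bullet> x" and "\<forall>i\<in>I. 0 \<le> u i"
    and "cc = (\<Sum>i\<in>I. u i *\<^sub>R p i)" and "cc \<bullet> x = (\<Sum>i\<in>I. u i * b i)"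
proof -
  obtain x where x: "\<forall>i\<in>I. b i \<le> p i \<bullet> x" and min: "\<forall>x'. (\<forall>i\<in>I. b i \<le> p i \<bullet> x') \<longrightarrow> cc \<bullet> x \<le> cc \<bullet> x'"
    using lp_min_attained[OF assms] .
  obtain u where u: "\<forall>i\<in>I. 0 \<le> u i" "cc = (\<Sum>i\<in>I. u i *\<^sub>R p i)" "cc \<bullet> x \<le> (\<Sum>i\<in>I. u i * b i)"
    using affine_farkas[OF assms(1) x min] .
  moreover have "(\<Sum>i\<in>I. u i * b i) \<le> cc \<bullet> x"
    using nonneg_combination_le[OF x u(1)] u(2) by simp
  ultimately show thesis
    using x by (intro that[of x u]) auto
qed

lemma lp_strong_duality_fun:
  fixes A :: "'i::finite \<Rightarrow> 'j::finite \<Rightarrow> real"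
  assumes "\<forall>i. b i \<le> (\<Sum>j\<in>UNIV. A i j * x0 j)"
    and "\<forall>x. (\<forall>i. b i \<le> (\<Sum>j\<in>UNIV. A i j * x j)) \<longrightarrow> m \<le> (\<Sum>j\<in>UNIV. cc j * x j)"
  obtains x u where "\<forall>i. b i \<le> (\<Sum>j\<in>UNIV. A i j * x j)" and "\<forall>i. 0 \<le> u i"
    and "\<forall>j. cc j = (\<Sum>i\<in>UNIV. u i * A i j)" and "(\<Sum>j\<in>UNIV. cc j * x j) = (\<Sum>i\<in>UNIV. u i * b i)"
proof -
  define p where "p i = (\<chi> j. A i j)" for i
  have p: "p i \<bullet> X = (\<Sum>j\<in>UNIV. A i j * X $ j)" for i X
    unfolding p_def inner_vec_def by simp
  have cc: "(\<chi> j. cc j) \<bullet> X = (\<Sum>j\<in>UNIV. cc j * X $ j)" for X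
    unfolding inner_vec_def by simp
  obtain X u where X: "\<forall>i\<in>UNIV. b i \<le> p i \<bullet> X" and u: "\<forall>i\<in>UNIV. 0 \<le> u i"
    and dual: "(\<chi> j. cc j) = (\<Sum>i\<in>UNIV. u i *\<^sub>R p i)"
    and gap: "(\<chi> j. cc j) \<bullet> X = (\<Sum>i\<in>UNIV. u i * b i)"
  proof (rule lp_strong_duality[of UNIV b p "\<chi> j. x0 j" m "\<chi> j. cc j"])
    show "\<forall>i\<in>UNIV. b i \<le> p i \<bullet> (\<chi> j. x0 j)"
      using assms(1) by (simp add: p)
    show "\<forall>X. (\<forall>i\<in>UNIV. b i \<le> p i \<bullet> X) \<longrightarrow> m \<le> (\<chi> j. cc j) \<bullet> X"
      using assms(2) by (simp add: p cc)
  qed auto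
  have "cc j = (\<Sum>i\<in>UNIV. u i * A i j)" for j
    using arg_cong[OF dual, of "\<lambda>v. v $ j"] by (simp add: p_def)
  moreover have "(\<Sum>j\<in>UNIV. cc j * X $ j) = (\<Sum>i\<in>UNIV. u i * b i)"
    using gap by (simp only: cc)
  ultimately show thesis
    using X u by (intro that[of "\<lambda>j. X $ j" u]) (simp_all add: p)
qed

section \<open>Faces of epigraphs\<close>

lemma singleton_projection_face_iff:
  fixes E :: "('a::real_vector \<times> real) set"
  shows "(\<exists>F. F face_of E \<and> (0, 1) \<notin> aff_direction F \<and> {w} = fst ` F) \<longleftrightarrow>
         (\<exists>z. (w, z) extreme_point_of E)"
proof
  assume "\<exists>F. F face_of E \<and> (0, 1) \<notin> aff_direction F \<and> {w} = fst ` F"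
  then obtain F where F: "F face_of E" "(0, 1) \<notin> aff_direction F" "{w} = fst ` F"
    by blast
  then obtain z where p: "(w, z) \<in> F"
    by (metis fst_conv imageE insertI1 prod.collapse)
  have "q = (w, z)" if "q \<in> F" for q
  proof (rule ccontr)
    assume "q \<noteq> (w, z)"
    moreover have "fst q = w"
      using F(3) that by (metis imageI singletonD)
    ultimately have "snd q \<noteq> z"
      by (metis prod.collapse)
    have "q - (w, z) \<in> aff_direction F"
      unfolding aff_direction_def using that p by (intro span_base) blast
    then have "(1 / (snd q - z)) *\<^sub>R (q - (w, z)) \<in> aff_direction F"
      unfolding aff_direction_def by (rule span_mul)
    moreover have "(1 / (snd q - z)) *\<^sub>R (q - (w, z)) = (0, 1)"
      using \<open>fst q = w\<close> \<open>snd q \<noteq> z\<close> by (simp add: prod_eq_iff)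
    ultimately show False
      using F(2) by simp
  qed
  with p have "F = {(w, z)}" by blast
  with F(1) show "\<exists>z. (w, z) extreme_point_of E"
    by (auto simp: face_of_singleton)
next
  assume "\<exists>z. (w, z) extreme_point_of E"
  then obtain z where "{(w, z)} face_of E"
    by (auto simp: face_of_singleton)
  moreover have "aff_direction {(w, z)} = {0}"
    by (simp add: aff_direction_def flip: zero_prod_def)
  ultimately show "\<exists>F. F face_of E \<and> (0, 1) \<notin> aff_direction F \<and> {w} = fst ` F"
    by (intro exI[of _ "{(w, z)}"]) (simp add: zero_prod_def)
qed

lemma extreme_point_of_upward_closed:
  fixes E :: "('a::real_vector \<times> real) set"
  assumes "(w, z) extreme_point_of E" and "\<forall>z''\<ge>z'. (w, z'') \<in> E" and "z' \<le> z"
  shows "z = z'"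
proof (rule ccontr)
  assume "z \<noteq> z'"
  with assms(3) have "(w, z) \<in> open_segment (w, z') (w, 2 * z - z')"
    unfolding in_segment
    by (intro conjI exI[of _ "1 / 2"]) (auto simp: algebra_simps simp flip: scaleR_add_left)
  with assms show False
    by (simp add: extreme_point_of_def)
qed

lemma in_open_segment_along_line:
  fixes w a :: "'a::real_vector"
  assumes "0 < s1" and "0 < s2" and "a \<noteq> 0"
  shows "(w, z) \<in> open_segment (w + s1 *\<^sub>R a, z - \<beta> * s1) (w - s2 *\<^sub>R a, z + \<beta> * s2)"
  unfolding in_segment
proof (intro conjI exI)
  define u where "u = s1 / (s1 + s2)"
  show "0 < u" "u < 1"
    using assms by (auto simp: u_def)
  have u: "(1 - u) * s1 = u * s2"
    using assms by (simp add: u_def field_simps)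
  have "(1 - u) *\<^sub>R (w + s1 *\<^sub>R a) + u *\<^sub>R (w - s2 *\<^sub>R a) = w + ((1 - u) * s1 - u * s2) *\<^sub>R a"
    by (simp add: algebra_simps)
  moreover have "(1 - u) * (z - \<beta> * s1) + u * (z + \<beta> * s2) = z - \<beta> * ((1 - u) * s1 - u * s2)"
    by (simp add: algebra_simps)
  ultimately show "(w, z) = (1 - u) *\<^sub>R (w + s1 *\<^sub>R a, z - \<beta> * s1) + u *\<^sub>R (w - s2 *\<^sub>R a, z + \<beta> * s2)"
    using u by simp
  have "(s1 + s2) *\<^sub>R a \<noteq> 0"
    using assms by simp
  then show "(w + s1 *\<^sub>R a, z - \<beta> * s1) \<noteq> (w - s2 *\<^sub>R a, z + \<beta> * s2)"
    by (auto simp: algebra_simps)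
qed

section \<open>The lower-level problem and its dual\<close>

lemma sum_UNIV_Plus:
  "(\<Sum>i\<in>(UNIV::('a::finite + 'b::finite) set). f i) = (\<Sum>a\<in>UNIV. f (Inl a)) + (\<Sum>b\<in>UNIV. f (Inr b))"
  by (subst UNIV_Plus_UNIV[symmetric], subst sum.Plus) (auto simp: comp_def)

definition incidence :: "('e \<Rightarrow> 'v) \<Rightarrow> ('e \<Rightarrow> 'v) \<Rightarrow> 'v \<Rightarrow> 'e \<Rightarrow> real" where
  "incidence tail head i e = of_bool (tail e = i) - of_bool (head e = i)"

lemma sum_potential_incidence:
  fixes y :: "'v::finite \<Rightarrow> real"
  shows "(\<Sum>i\<in>UNIV. y i * incidence tail head i e) = y (tail e) - y (head e)"
  by (simp add: incidence_def right_diff_distrib sum_subtractf)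

lemma flow_conservation_iff_incidence:
  "flow_conservation tail head orig dst x \<longleftrightarrow>
     (\<forall>i. (\<Sum>e\<in>UNIV. incidence tail head i e * x e) = node_supply orig dst i)"
  by (simp add: flow_conservation_def incidence_def left_diff_distrib sum_subtractf
      sum.inter_filter[symmetric])

lemma toll_free_path_flow:
  fixes tail head :: "'k::finite + 'f::finite \<Rightarrow> 'v::finite"
  assumes "(u, v) \<in> {(tail (Inr a), head (Inr a)) | a. True}\<^sup>*"
  shows "\<exists>x. (\<forall>e. 0 \<le> x e) \<and> (\<forall>k. x (Inl k) = 0) \<and>
           (\<forall>i. (\<Sum>e\<in>UNIV. incidence tail head i e * x e) = of_bool (i = u) - of_bool (i = v))"
  using assms
proof (induction rule: rtrancl_induct)
  case base
  show ?case by (intro exI[of _ "\<lambda>e. 0"]) simp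
next
  case (step v v')
  then obtain x a where x: "\<forall>e. 0 \<le> x e" "\<forall>k. x (Inl k) = 0"
    "\<forall>i. (\<Sum>e\<in>UNIV. incidence tail head i e * x e) = of_bool (i = u) - of_bool (i = v)"
    and a: "v = tail (Inr a)" "v' = head (Inr a)"
    by blast
  define x' where "x' e = x e + of_bool (e = Inr a)" for e
  have "(\<Sum>e\<in>UNIV. incidence tail head i e * x' e)
      = (\<Sum>e\<in>UNIV. incidence tail head i e * x e) + incidence tail head i (Inr a)" for i
    by (simp add: x'_def distrib_left sum.distrib)
  then have "(\<Sum>e\<in>UNIV. incidence tail head i e * x' e) = of_bool (i = u) - of_bool (i = v')" for i
    using x(3) a by (auto simp: incidence_def)
  moreover have "\<forall>e. 0 \<le> x' e" "\<forall>k. x' (Inl k) = 0"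
    using x by (auto simp: x'_def)
  ultimately show ?case by blast
qed

definition row_potential :: "('v + 'v + 'e + 'k \<Rightarrow> real) \<Rightarrow> 'v \<Rightarrow> real" where
  "row_potential u i = u (Inl i) - u (Inr (Inl i))"

definition row_tolls :: "('v + 'v + 'e + 'k \<Rightarrow> real) \<Rightarrow> real^'k" where
  "row_tolls u = (\<chi> k. u (Inr (Inr (Inr k))))"

locale toll_network =
  fixes tail head :: "'k::finite + 'f::finite \<Rightarrow> 'v::finite"
    and c :: "'k + 'f \<Rightarrow> real"
    and orig dst :: 'v
  assumes c_nonneg: "\<forall>e. 0 \<le> c e"
    and od_distinct: "orig \<noteq> dst"
    and toll_free_path: "(orig, dst) \<in> {(tail (Inr a), head (Inr a)) | a. True}\<^sup>*"
begin

abbreviation "flows \<equiv> Xset tail head orig dst"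
abbreviation "duals \<equiv> dual_feasible tail head c"
abbreviation "supply \<equiv> node_supply orig dst"
abbreviation "obj \<equiv> dual_obj orig dst"
abbreviation "epi \<equiv> epi_g tail head orig dst c"
abbreviation capped :: "('k + 'f \<Rightarrow> real) \<Rightarrow> real^'k \<Rightarrow> bool" where
  "capped x w \<equiv> \<forall>k. x (Inl k) \<le> w $ k"

lemma flows_iff:
  "x \<in> flows \<longleftrightarrow> (\<forall>i. (\<Sum>e\<in>UNIV. incidence tail head i e * x e) = supply i) \<and> (\<forall>e. 0 \<le> x e)"
  by (simp add: Xset_def flow_conservation_iff_incidence)

lemma toll_free_flow: "\<exists>x\<in>flows. \<forall>k. x (Inl k) = 0"
proof -
  obtain x where "\<forall>e. 0 \<le> x e" "\<forall>k. x (Inl k) = 0"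
    "\<forall>i. (\<Sum>e\<in>UNIV. incidence tail head i e * x e) = of_bool (i = orig) - of_bool (i = dst)"
    using toll_free_path_flow[OF toll_free_path] by blast
  moreover have "supply i = of_bool (i = orig) - of_bool (i = dst)" for i
    using od_distinct by (simp add: node_supply_def)
  ultimately show ?thesis by (auto simp: flows_iff)
qed

lemma arc_cost_nonneg: "x \<in> flows \<Longrightarrow> 0 \<le> arc_cost c x"
  unfolding arc_cost_def Xset_def using c_nonneg by (auto intro: sum_nonneg)

lemma toll_payment_nonneg: "nonneg_vec t \<Longrightarrow> \<forall>e. 0 \<le> x e \<Longrightarrow> 0 \<le> t \<bullet> restrA1 x"
  unfolding nonneg_vec_def inner_vec_def restrA1_def by (auto intro!: sum_nonneg)

lemma toll_payment_le: "nonneg_vec t \<Longrightarrow> capped x w \<Longrightarrow> t \<bullet> restrA1 x \<le> t \<bullet> w"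
  unfolding nonneg_vec_def inner_vec_def restrA1_def by (auto intro!: sum_mono mult_left_mono)

lemma sum_ext_toll: "(\<Sum>e\<in>UNIV. x e * ext_toll t e) = t \<bullet> restrA1 (x :: 'k + 'f \<Rightarrow> real)"
  by (simp add: sum_UNIV_Plus ext_toll_def inner_vec_def restrA1_def mult.commute)

lemma supply_potential_le_cost:
  assumes x: "x \<in> flows" and ty: "(t, y) \<in> duals"
  shows "(\<Sum>i\<in>UNIV. supply i * y i) \<le> arc_cost c x + t \<bullet> restrA1 x"
proof -
  have "(\<Sum>i\<in>UNIV. supply i * y i) = (\<Sum>i\<in>UNIV. (\<Sum>e\<in>UNIV. incidence tail head i e * x e) * y i)"
    using x by (simp add: flows_iff)
  also have "\<dots> = (\<Sum>i\<in>UNIV. \<Sum>e\<in>UNIV. x e * (y i * incidence tail head i e))"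
    unfolding sum_distrib_right by (simp add: mult_ac)
  also have "\<dots> = (\<Sum>e\<in>UNIV. x e * (y (tail e) - y (head e)))"
    by (subst sum.swap) (simp add: sum_distrib_left[symmetric] sum_potential_incidence)
  also have "\<dots> \<le> (\<Sum>e\<in>UNIV. x e * (c e + ext_toll t e))"
    using ty x unfolding dual_feasible_def Xset_def
    by (intro sum_mono mult_left_mono) (auto simp: algebra_simps)
  also have "\<dots> = arc_cost c x + t \<bullet> restrA1 x"
    by (simp add: distrib_left sum.distrib sum_ext_toll arc_cost_def mult.commute)
  finally show ?thesis .
qed

lemma dual_obj_le_arc_cost:
  assumes "x \<in> flows" and "capped x w" and "(t, y) \<in> duals"
  shows "obj w t y \<le> arc_cost c x"
proof -
  have "t \<bullet> restrA1 x \<le> t \<bullet> w"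
    using assms(2,3) by (intro toll_payment_le) (simp add: dual_feasible_def)
  with supply_potential_le_cost[OF assms(1,3)] show ?thesis
    by (simp add: dual_obj_def inner_commute)
qed

text \<open>
  The lower-level problem as a system \<open>A x \<ge> b\<close> with rows \<open>N x \<ge> b\<close>, \<open>-N x \<ge> -b\<close>, \<open>x \<ge> 0\<close> and
  \<open>-x\<^sub>A\<^sub>1 \<ge> -w\<close>. For multipliers \<open>u \<ge> 0\<close> of these rows, \<^const>\<open>row_potential\<close> and \<^const>\<open>row_tolls\<close>
  are the corresponding dual variables \<open>y\<close> and \<open>t\<close>, and the multipliers of \<open>x \<ge> 0\<close> are the
  slacks of the dual constraints.
\<close>

definition flow_matrix :: "'v + 'v + ('k + 'f) + 'k \<Rightarrow> 'k + 'f \<Rightarrow> real" where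
  "flow_matrix = case_sum (incidence tail head)
     (case_sum (\<lambda>i e. - incidence tail head i e)
       (case_sum (\<lambda>e' e. of_bool (e' = e)) (\<lambda>k e. - of_bool (e = Inl k))))"

definition flow_rhs :: "real^'k \<Rightarrow> 'v + 'v + ('k + 'f) + 'k \<Rightarrow> real" where
  "flow_rhs w = case_sum supply (case_sum (\<lambda>i. - supply i) (case_sum (\<lambda>e. 0) (\<lambda>k. - w $ k)))"

lemma flow_system_iff:
  "(\<forall>r. flow_rhs w r \<le> (\<Sum>e\<in>UNIV. flow_matrix r e * x e)) \<longleftrightarrow> x \<in> flows \<and> capped x w"
  by (auto simp: split_sum_all flow_matrix_def flow_rhs_def flows_iff sum_negf intro: order.antisym)

lemma flow_matrix_column:
  "(\<Sum>r\<in>UNIV. u r * flow_matrix r e) =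
     row_potential u (tail e) - row_potential u (head e) + u (Inr (Inr (Inl e))) - ext_toll (row_tolls u) e"
  by (cases e) (simp_all add: sum_UNIV_Plus flow_matrix_def row_potential_def row_tolls_def ext_toll_def
      sum_potential_incidence right_diff_distrib sum_subtractf sum_negf)

lemma flow_rhs_combination:
  "(\<Sum>r\<in>UNIV. u r * flow_rhs w r) = obj w (row_tolls u) (row_potential u)"
  by (simp add: sum_UNIV_Plus flow_rhs_def dual_obj_def row_potential_def row_tolls_def inner_vec_def
      algebra_simps sum_subtractf sum_negf)

lemma strong_duality:
  assumes "nonneg_vec w"
  obtains x t y where "x \<in> flows" and "capped x w" and "(t, y) \<in> duals" and "arc_cost c x = obj w t y"
proof -
  obtain x0 where "x0 \<in> flows" "\<forall>k. x0 (Inl k) = 0"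
    using toll_free_flow by blast
  with assms have x0: "\<forall>r. flow_rhs w r \<le> (\<Sum>e\<in>UNIV. flow_matrix r e * x0 e)"
    by (simp add: flow_system_iff nonneg_vec_def)
  have bound: "\<forall>x. (\<forall>r. flow_rhs w r \<le> (\<Sum>e\<in>UNIV. flow_matrix r e * x e)) \<longrightarrow> 0 \<le> (\<Sum>e\<in>UNIV. c e * x e)"
    using arc_cost_nonneg by (simp add: flow_system_iff arc_cost_def)
  obtain x u where x: "\<forall>r. flow_rhs w r \<le> (\<Sum>e\<in>UNIV. flow_matrix r e * x e)" and u: "\<forall>r. 0 \<le> u r"
    and col: "\<forall>e. c e = (\<Sum>r\<in>UNIV. u r * flow_matrix r e)"
    and val: "(\<Sum>e\<in>UNIV. c e * x e) = (\<Sum>r\<in>UNIV. u r * flow_rhs w r)"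
    by (rule lp_strong_duality_fun[OF x0 bound])
  have "(row_tolls u, row_potential u) \<in> duals"
  proof -
    have "row_potential u (tail e) - row_potential u (head e) - ext_toll (row_tolls u) e \<le> c e" for e
      using col u[rule_format, of "Inr (Inr (Inl e))"] by (simp add: flow_matrix_column)
    with u show ?thesis
      by (simp add: dual_feasible_def nonneg_vec_def row_tolls_def)
  qed
  with x val show thesis
    by (intro that) (simp_all add: flow_system_iff arc_cost_def flow_rhs_combination)
qed

definition opt_cost :: "real^'k \<Rightarrow> real" where
  "opt_cost w = Inf {arc_cost c x | x. x \<in> flows \<and> capped x w}"

lemma opt_cost_le: "x \<in> flows \<Longrightarrow> capped x w \<Longrightarrow> opt_cost w \<le> arc_cost c x"
  unfolding opt_cost_def
  by (rule cInf_lower) (auto intro!: bdd_belowI[of _ 0] arc_cost_nonneg)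

lemma opt_cost_attained:
  assumes "nonneg_vec w"
  obtains x t y where "x \<in> flows" and "capped x w" and "(t, y) \<in> duals"
    and "arc_cost c x = opt_cost w" and "obj w t y = opt_cost w"
proof -
  obtain x t y where xty: "x \<in> flows" "capped x w" "(t, y) \<in> duals" "arc_cost c x = obj w t y"
    using strong_duality[OF assms] .
  have "opt_cost w \<le> arc_cost c x"
    using xty by (intro opt_cost_le)
  moreover have "obj w t y \<le> opt_cost w"
    unfolding opt_cost_def using xty by (auto intro!: cInf_greatest dual_obj_le_arc_cost)
  ultimately show thesis
    using xty by (intro that) auto
qed

lemma dual_obj_le_opt_cost:
  assumes "nonneg_vec w" and "(t, y) \<in> duals"
  shows "obj w t y \<le> opt_cost w"
proof -
  obtain x where "x \<in> flows" "capped x w" "arc_cost c x = opt_cost w"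
    using opt_cost_attained[OF assms(1)] by metis
  with dual_obj_le_arc_cost[OF _ _ assms(2)] show ?thesis by metis
qed

lemma mem_bT_iff:
  assumes "nonneg_vec w"
  shows "t \<in> bT tail head orig dst c w \<longleftrightarrow> (\<exists>y. (t, y) \<in> duals \<and> obj w t y = opt_cost w)"
proof
  assume "t \<in> bT tail head orig dst c w"
  then obtain y where y: "(t, y) \<in> duals" and max: "\<forall>(t', y')\<in>duals. obj w t' y' \<le> obj w t y"
    unfolding bT_def by blast
  obtain t0 y0 where "(t0, y0) \<in> duals" "obj w t0 y0 = opt_cost w"
    using opt_cost_attained[OF assms] by metis
  with max have "opt_cost w \<le> obj w t y" by fastforce
  with y dual_obj_le_opt_cost[OF assms y] show "\<exists>y. (t, y) \<in> duals \<and> obj w t y = opt_cost w"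
    by (intro exI[of _ y]) simp
next
  assume "\<exists>y. (t, y) \<in> duals \<and> obj w t y = opt_cost w"
  with dual_obj_le_opt_cost[OF assms] show "t \<in> bT tail head orig dst c w"
    unfolding bT_def by fastforce
qed

lemma bT_nonempty: "nonneg_vec w \<Longrightarrow> bT tail head orig dst c w \<noteq> {}"
  by (metis opt_cost_attained mem_bT_iff empty_iff)

lemma opt_cost_subgradient:
  assumes "nonneg_vec w" and "t \<in> bT tail head orig dst c w" and "nonneg_vec w'"
  shows "opt_cost w - t \<bullet> (w' - w) \<le> opt_cost w'"
proof -
  obtain y where y: "(t, y) \<in> duals" "obj w t y = opt_cost w"
    using assms(1,2) mem_bT_iff by blast
  have "obj w' t y = obj w t y - t \<bullet> (w' - w)"
    by (simp add: dual_obj_def inner_diff_right inner_commute)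
  with dual_obj_le_opt_cost[OF assms(3) y(1)] y(2) show ?thesis by simp
qed

lemma mem_bW_iff:
  assumes w: "nonneg_vec w" and t: "t \<in> bT tail head orig dst c w"
  shows "w' \<in> bW tail head orig dst c t \<longleftrightarrow> nonneg_vec w' \<and> opt_cost w' + t \<bullet> w' \<le> opt_cost w + t \<bullet> w"
proof
  assume "w' \<in> bW tail head orig dst c t"
  then obtain x' where x': "(w', x') \<in> lower_feasible tail head orig dst"
    and min: "\<forall>(w'', x'')\<in>lower_feasible tail head orig dst. arc_cost c x' + t \<bullet> w' \<le> arc_cost c x'' + t \<bullet> w''"
    unfolding bW_def by blast
  obtain x where x: "x \<in> flows" "capped x w" "arc_cost c x = opt_cost w"
    using opt_cost_attained[OF w] by metis
  moreover have "(w, x) \<in> lower_feasible tail head orig dst"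
    using x w by (simp add: lower_feasible_def)
  ultimately have "arc_cost c x' + t \<bullet> w' \<le> opt_cost w + t \<bullet> w"
    using min by fastforce
  moreover have "opt_cost w' \<le> arc_cost c x'"
    using x' by (auto simp: lower_feasible_def intro: opt_cost_le)
  ultimately show "nonneg_vec w' \<and> opt_cost w' + t \<bullet> w' \<le> opt_cost w + t \<bullet> w"
    using x' by (auto simp: lower_feasible_def)
next
  assume w': "nonneg_vec w' \<and> opt_cost w' + t \<bullet> w' \<le> opt_cost w + t \<bullet> w"
  obtain x' where x': "x' \<in> flows" "capped x' w'" "arc_cost c x' = opt_cost w'"
    using opt_cost_attained w' by metis
  have "arc_cost c x' + t \<bullet> w' \<le> arc_cost c x'' + t \<bullet> w''"
    if "(w'', x'') \<in> lower_feasible tail head orig dst" for w'' x''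
  proof -
    have "x'' \<in> flows" "capped x'' w''" "nonneg_vec w''"
      using that by (auto simp: lower_feasible_def)
    then have "opt_cost w'' \<le> arc_cost c x''" "opt_cost w - t \<bullet> (w'' - w) \<le> opt_cost w''"
      using opt_cost_le opt_cost_subgradient[OF w t] by auto
    with w' x'(3) show ?thesis
      by (simp add: inner_diff_right)
  qed
  with x' w' show "w' \<in> bW tail head orig dst c t"
    unfolding bW_def lower_feasible_def by blast
qed

lemma gval_eq_opt_cost:
  assumes w: "nonneg_vec w"
  shows "gval tail head orig dst c w = ereal (opt_cost w)"
  unfolding gval_def
proof (rule antisym)
  obtain x t y where xty: "x \<in> flows" "capped x w" "(t, y) \<in> duals"
    "arc_cost c x = opt_cost w" "obj w t y = opt_cost w"
    using opt_cost_attained[OF w] .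
  show "(SUP t. fval tail head orig dst c t - ereal (t \<bullet> w)) \<le> ereal (opt_cost w)"
  proof (rule SUP_least)
    fix t' :: "real^'k"
    show "fval tail head orig dst c t' - ereal (t' \<bullet> w) \<le> ereal (opt_cost w)"
    proof (cases "nonneg_vec t'")
      case True
      have "fval tail head orig dst c t' \<le> ereal (arc_cost c x + t' \<bullet> restrA1 x)"
        unfolding fval_def using True xty(1) by (auto intro: INF_lower)
      moreover have "t' \<bullet> restrA1 x \<le> t' \<bullet> w"
        using True xty(2) by (rule toll_payment_le)
      ultimately show ?thesis
        using xty(4) by (cases "fval tail head orig dst c t'") auto
    qed (simp add: fval_def)
  qed
  have "nonneg_vec t"
    using xty(3) by (simp add: dual_feasible_def)
  then have "ereal (\<Sum>i\<in>UNIV. supply i * y i) \<le> fval tail head orig dst c t"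
    unfolding fval_def using supply_potential_le_cost[OF _ xty(3)] by (auto intro!: INF_greatest)
  moreover have "(\<Sum>i\<in>UNIV. supply i * y i) - t \<bullet> w = opt_cost w"
    using xty(5) by (simp add: dual_obj_def inner_commute)
  ultimately have "ereal (opt_cost w) \<le> fval tail head orig dst c t - ereal (t \<bullet> w)"
    by (cases "fval tail head orig dst c t") auto
  then show "ereal (opt_cost w) \<le> (SUP t. fval tail head orig dst c t - ereal (t \<bullet> w))"
    by (rule SUP_upper2[OF UNIV_I])
qed

lemma gval_infinite_outside:
  assumes "\<not> nonneg_vec w"
  shows "gval tail head orig dst c w = \<infinity>"
proof -
  obtain k where k: "w $ k < 0"
    using assms by (auto simp: nonneg_vec_def not_le)
  have "ereal r < gval tail head orig dst c w" for r
  proof -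
    define t :: "real^'k" where "t = (\<chi> j. if j = k then (\<bar>r\<bar> + 1) / - w $ k else 0)"
    have "nonneg_vec t"
      using k by (simp add: t_def nonneg_vec_def divide_nonneg_neg)
    have "t \<bullet> w = - (\<bar>r\<bar> + 1)"
      using k by (simp add: t_def inner_vec_def if_distrib[of "\<lambda>a. a * _"] cong: if_cong)
    moreover have "0 \<le> fval tail head orig dst c t"
    proof -
      have "0 \<le> arc_cost c x + t \<bullet> restrA1 x" if "x \<in> flows" for x
        using that \<open>nonneg_vec t\<close> arc_cost_nonneg[OF that] toll_payment_nonneg[of t x]
        by (simp add: Xset_def)
      with \<open>nonneg_vec t\<close> show ?thesis
        unfolding fval_def by (simp add: INF_greatest)
    qed
    ultimately have "ereal r < fval tail head orig dst c t - ereal (t \<bullet> w)"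
      by (cases "fval tail head orig dst c t") auto
    also have "\<dots> \<le> gval tail head orig dst c w"
      unfolding gval_def by (rule SUP_upper) simp
    finally show ?thesis .
  qed
  then show ?thesis
    by (meson ereal_top less_imp_le)
qed

lemma epi_g_iff: "(w, z) \<in> epi_g tail head orig dst c \<longleftrightarrow> nonneg_vec w \<and> opt_cost w \<le> z"
  by (cases "nonneg_vec w") (simp_all add: epi_g_def gval_eq_opt_cost gval_infinite_outside)

lemma bT_combination:
  assumes w: "nonneg_vec w" and opt: "(t0, y0) \<in> duals" "obj w t0 y0 = opt_cost w"
    and \<theta>: "0 \<le> \<theta>" and t: "nonneg_vec t"
    and ty: "\<forall>e. y (tail e) - y (head e) - ext_toll t e \<le> \<theta> * c e"
    and obj: "\<theta> * opt_cost w \<le> obj w t y"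
  shows "(1 / (1 + \<theta>)) *\<^sub>R (t0 + t) \<in> bT tail head orig dst c w"
proof -
  define a where "a = 1 / (1 + \<theta>)"
  have a: "0 < a" "a * (1 + \<theta>) = 1"
    using \<theta> by (simp_all add: a_def)
  define y' where "y' i = a * (y0 i + y i)" for i
  have "(a *\<^sub>R (t0 + t), y') \<in> duals"
    unfolding dual_feasible_def
  proof (intro CollectI case_prodI conjI allI)
    fix e
    have "y0 (tail e) - y0 (head e) - ext_toll t0 e \<le> c e"
      using opt(1) by (simp add: dual_feasible_def)
    then have "(y0 (tail e) - y0 (head e) - ext_toll t0 e) + (y (tail e) - y (head e) - ext_toll t e)
        \<le> (1 + \<theta>) * c e"
      using ty[rule_format, of e] by (simp add: distrib_right; linarith)
    then have "a * ((y0 (tail e) - y0 (head e) - ext_toll t0 e) + (y (tail e) - y (head e) - ext_toll t e))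
        \<le> a * ((1 + \<theta>) * c e)"
      using a(1) by (simp add: mult_left_mono)
    also have "a * ((1 + \<theta>) * c e) = c e"
      using a(2) by (metis mult.assoc mult_1)
    finally show "y' (tail e) - y' (head e) - ext_toll (a *\<^sub>R (t0 + t)) e \<le> c e"
      by (cases e) (simp_all add: y'_def ext_toll_def algebra_simps)
  next
    show "nonneg_vec (a *\<^sub>R (t0 + t))"
      using opt(1) t a(1) by (simp add: dual_feasible_def nonneg_vec_def)
  qed
  moreover have "obj w (a *\<^sub>R (t0 + t)) y' = a * (obj w t0 y0 + obj w t y)"
    by (simp add: dual_obj_def y'_def algebra_simps sum.distrib sum_distrib_left inner_add_right)
  moreover have "opt_cost w \<le> a * (obj w t0 y0 + obj w t y)"
  proof -
    have "opt_cost w = a * ((1 + \<theta>) * opt_cost w)"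
      using a(2) by (simp add: mult.assoc[symmetric])
    also have "\<dots> \<le> a * (obj w t0 y0 + obj w t y)"
      using a(1) opt(2) obj by (intro mult_left_mono) (simp_all add: algebra_simps)
    finally show ?thesis .
  qed
  ultimately have "\<exists>y. (a *\<^sub>R (t0 + t), y) \<in> duals \<and> obj w (a *\<^sub>R (t0 + t)) y = opt_cost w"
    using dual_obj_le_opt_cost[OF w] by (metis order.antisym)
  then show ?thesis
    unfolding a_def mem_bT_iff[OF w] .
qed

text \<open>
  The sensitivity LP along a direction \<open>d\<close>: maximise \<open>s\<close> subject to \<open>x \<in> X\<close>,
  \<open>x\<^sub>A\<^sub>1 \<le> w + s d\<close> and \<open>c x + \<beta> s \<le> G(w)\<close>, in variables \<open>(x, s)\<close>.
\<close>

definition cap_shift :: "real^'k \<Rightarrow> 'v + 'v + ('k + 'f) + 'k \<Rightarrow> real" where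
  "cap_shift d = case_sum (\<lambda>_. 0) (case_sum (\<lambda>_. 0) (case_sum (\<lambda>_. 0) (\<lambda>k. d $ k)))"

definition step_matrix :: "real^'k \<Rightarrow> real \<Rightarrow> ('v + 'v + ('k + 'f) + 'k) + unit \<Rightarrow> ('k + 'f) + unit \<Rightarrow> real" where
  "step_matrix d \<beta> = case_sum (\<lambda>r. case_sum (flow_matrix r) (\<lambda>_. cap_shift d r))
     (\<lambda>_. case_sum (\<lambda>e. - c e) (\<lambda>_. - \<beta>))"

definition step_rhs :: "real^'k \<Rightarrow> ('v + 'v + ('k + 'f) + 'k) + unit \<Rightarrow> real" where
  "step_rhs w = case_sum (flow_rhs w) (\<lambda>_. - opt_cost w)"

lemma step_system_iff:
  "(\<forall>r. step_rhs w r \<le> (\<Sum>j\<in>UNIV. step_matrix d \<beta> r j * z j)) \<longleftrightarrow>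
     (\<lambda>e. z (Inl e)) \<in> flows \<and> capped (\<lambda>e. z (Inl e)) (w + z (Inr ()) *\<^sub>R d)
     \<and> arc_cost c (\<lambda>e. z (Inl e)) + \<beta> * z (Inr ()) \<le> opt_cost w"
proof -
  have split: "(\<forall>r. P r) \<longleftrightarrow> (\<forall>r. P (Inl r)) \<and> P (Inr ())" for P :: "'r + unit \<Rightarrow> bool"
    by (metis (full_types) old.unit.exhaust sum.exhaust)
  have "flow_rhs w r - z (Inr ()) * cap_shift d r = flow_rhs (w + z (Inr ()) *\<^sub>R d) r" for r
    by (simp add: flow_rhs_def cap_shift_def split: sum.split)
  then have "(\<forall>r. step_rhs w (Inl r) \<le> (\<Sum>j\<in>UNIV. step_matrix d \<beta> (Inl r) j * z j)) \<longleftrightarrow>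
      (\<forall>r. flow_rhs (w + z (Inr ()) *\<^sub>R d) r \<le> (\<Sum>e\<in>UNIV. flow_matrix r e * z (Inl e)))"
    by (simp add: step_rhs_def step_matrix_def sum_UNIV_Plus UNIV_unit algebra_simps)
  moreover have "step_rhs w (Inr ()) \<le> (\<Sum>j\<in>UNIV. step_matrix d \<beta> (Inr ()) j * z j) \<longleftrightarrow>
      arc_cost c (\<lambda>e. z (Inl e)) + \<beta> * z (Inr ()) \<le> opt_cost w"
    by (simp add: step_rhs_def step_matrix_def sum_UNIV_Plus UNIV_unit arc_cost_def sum_negf; linarith)
  ultimately show ?thesis
    unfolding split[of "\<lambda>r. step_rhs w r \<le> (\<Sum>j\<in>UNIV. step_matrix d \<beta> r j * z j)"]
    by (simp add: flow_system_iff)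
qed

lemma cap_shift_combination: "(\<Sum>r\<in>UNIV. u r * cap_shift d r) = row_tolls u \<bullet> d"
  by (simp add: sum_UNIV_Plus cap_shift_def row_tolls_def inner_vec_def)

lemma step_multipliers:
  assumes u: "\<forall>r. 0 \<le> u r"
    and col: "\<forall>j. case_sum (\<lambda>_. 0) (\<lambda>_. - 1) j = (\<Sum>r\<in>UNIV. u r * step_matrix d \<beta> r j)"
  defines "t \<equiv> row_tolls (\<lambda>r. u (Inl r))" and "y \<equiv> row_potential (\<lambda>r. u (Inl r))"
  shows "\<forall>e. y (tail e) - y (head e) - ext_toll t e \<le> u (Inr ()) * c e"
    and "d \<bullet> t = u (Inr ()) * \<beta> - 1"
proof
  fix e
  show "y (tail e) - y (head e) - ext_toll t e \<le> u (Inr ()) * c e"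
    using col[rule_format, of "Inl e"] u[rule_format, of "Inl (Inr (Inr (Inl e)))"]
    by (simp add: step_matrix_def sum_UNIV_Plus[of "\<lambda>r. u r * _ r"] UNIV_unit flow_matrix_column y_def t_def)
next
  show "d \<bullet> t = u (Inr ()) * \<beta> - 1"
    using col[rule_format, of "Inr ()"]
    by (simp add: step_matrix_def sum_UNIV_Plus[of "\<lambda>r. u r * _ r"] UNIV_unit
        cap_shift_combination t_def inner_commute)
qed

lemma hyperplane_descent_step:
  assumes w: "nonneg_vec w" and hyp: "\<forall>t\<in>bT tail head orig dst c w. d \<bullet> t = \<beta>"
  shows "\<exists>x s. 0 < s \<and> x \<in> flows \<and> capped x (w + s *\<^sub>R d) \<and> arc_cost c x + \<beta> * s \<le> opt_cost w"
proof (rule ccontr)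
  \<comment> \<open>Otherwise the sensitivity LP has value \<open>0\<close>. Its optimal multipliers give \<open>(t, y)\<close> that is
     dual feasible for the costs \<open>\<theta> c\<close> with \<open>d \<bullet> t = \<theta> \<beta> - 1\<close>; averaging with an optimal
     \<open>(t0, y0)\<close> gives an optimal toll vector off the hyperplane.\<close>
  assume no_step: "\<not> ?thesis"
  obtain x0 t0 y0 where opt: "x0 \<in> flows" "capped x0 w" "(t0, y0) \<in> duals"
    "arc_cost c x0 = opt_cost w" "obj w t0 y0 = opt_cost w"
    using opt_cost_attained[OF w] .
  define goal :: "('k + 'f) + unit \<Rightarrow> real" where "goal = case_sum (\<lambda>_. 0) (\<lambda>_. - 1)"
  have z0: "\<forall>r. step_rhs w r \<le> (\<Sum>j\<in>UNIV. step_matrix d \<beta> r j * case_sum x0 (\<lambda>_. 0) j)"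
    using opt by (simp add: step_system_iff)
  have bound: "\<forall>z. (\<forall>r. step_rhs w r \<le> (\<Sum>j\<in>UNIV. step_matrix d \<beta> r j * z j))
      \<longrightarrow> 0 \<le> (\<Sum>j\<in>UNIV. goal j * z j)"
  proof (intro allI impI)
    fix z assume "\<forall>r. step_rhs w r \<le> (\<Sum>j\<in>UNIV. step_matrix d \<beta> r j * z j)"
    then have "\<not> 0 < z (Inr ())"
      using no_step by (auto simp: step_system_iff)
    then show "0 \<le> (\<Sum>j\<in>UNIV. goal j * z j)"
      by (simp add: goal_def sum_UNIV_Plus UNIV_unit)
  qed
  obtain z u where z: "\<forall>r. step_rhs w r \<le> (\<Sum>j\<in>UNIV. step_matrix d \<beta> r j * z j)"
    and u: "\<forall>r. 0 \<le> u r" and col: "\<forall>j. goal j = (\<Sum>r\<in>UNIV. u r * step_matrix d \<beta> r j)"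
    and val: "(\<Sum>j\<in>UNIV. goal j * z j) = (\<Sum>r\<in>UNIV. u r * step_rhs w r)"
    by (rule lp_strong_duality_fun[OF z0 bound])
  define \<theta> where "\<theta> = u (Inr ())"
  define t where "t = row_tolls (\<lambda>r. u (Inl r))"
  define y where "y = row_potential (\<lambda>r. u (Inl r))"
  note mult = step_multipliers[OF u col[unfolded goal_def], folded t_def y_def \<theta>_def]
  have "0 \<le> \<theta>" "nonneg_vec t"
    using u by (simp_all add: \<theta>_def t_def row_tolls_def nonneg_vec_def)
  moreover have "\<theta> * opt_cost w \<le> obj w t y"
    using val mp[OF spec[OF bound] z]
    by (simp add: step_rhs_def sum_UNIV_Plus[of "\<lambda>r. u r * _ r"] UNIV_unit flow_rhs_combination
        y_def t_def \<theta>_def)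
  ultimately have avg: "(1 / (1 + \<theta>)) *\<^sub>R (t0 + t) \<in> bT tail head orig dst c w"
    using mult(1) by (intro bT_combination[OF w opt(3,5)])
  have "d \<bullet> t0 = \<beta>"
    using hyp opt(3,5) mem_bT_iff[OF w] by blast
  with mult(2) have "d \<bullet> ((1 / (1 + \<theta>)) *\<^sub>R (t0 + t)) = (\<beta> + (\<theta> * \<beta> - 1)) / (1 + \<theta>)"
    by (simp add: inner_add_right)
  also have "\<dots> = \<beta> - 1 / (1 + \<theta>)"
    using \<open>0 \<le> \<theta>\<close> by (simp add: field_simps)
  finally have "d \<bullet> ((1 / (1 + \<theta>)) *\<^sub>R (t0 + t)) \<noteq> \<beta>"
    using \<open>0 \<le> \<theta>\<close> by simp
  with hyp avg show False
    by blast
qed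

lemma epi_step_along_hyperplane:
  assumes w: "nonneg_vec w" and hyp: "\<forall>t\<in>bT tail head orig dst c w. d \<bullet> t = \<beta>"
  obtains s where "0 < s" and "(w + s *\<^sub>R d, opt_cost w - \<beta> * s) \<in> epi"
proof -
  obtain x s where x: "0 < s" "x \<in> flows" "capped x (w + s *\<^sub>R d)" "arc_cost c x + \<beta> * s \<le> opt_cost w"
    using hyperplane_descent_step[OF assms] by blast
  have "nonneg_vec (w + s *\<^sub>R d)"
    unfolding nonneg_vec_def
  proof
    fix k
    have "0 \<le> x (Inl k)"
      using x(2) by (simp add: Xset_def)
    with x(3) show "0 \<le> (w + s *\<^sub>R d) $ k"
      by (meson order.trans)
  qed
  moreover have "opt_cost (w + s *\<^sub>R d) \<le> opt_cost w - \<beta> * s"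
    using opt_cost_le[OF x(2,3)] x(4) by simp
  ultimately show thesis
    using x(1) by (intro that[of s]) (simp_all add: epi_g_iff)
qed

lemma reaction_set_singleton_iff:
  assumes "nonneg_vec w"
  shows "reaction_set tail head orig dst c {w} \<longleftrightarrow> (w, opt_cost w) extreme_point_of epi"
proof -
  have "z = opt_cost w" if ext: "(w, z) extreme_point_of epi" for z
  proof (rule extreme_point_of_upward_closed[OF ext])
    show "\<forall>z''\<ge>opt_cost w. (w, z'') \<in> epi"
      using assms by (simp add: epi_g_iff)
    show "opt_cost w \<le> z"
      using ext by (simp add: extreme_point_of_def epi_g_iff)
  qed
  then show ?thesis
    unfolding reaction_set_def singleton_projection_face_iff by blast
qed

definition epi_gap :: "real^'k \<Rightarrow> real^'k \<Rightarrow> (real^'k) \<times> real \<Rightarrow> real" where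
  "epi_gap w t p = snd p - (opt_cost w - t \<bullet> (fst p - w))"

lemma epi_gap_nonneg:
  assumes "nonneg_vec w" and "t \<in> bT tail head orig dst c w" and "p \<in> epi"
  shows "0 \<le> epi_gap w t p"
proof -
  have "nonneg_vec (fst p)" "opt_cost (fst p) \<le> snd p"
    using assms(3) epi_g_iff[of "fst p" "snd p"] by simp_all
  with opt_cost_subgradient[OF assms(1,2)] show ?thesis
    by (smt (verit) epi_gap_def)
qed

lemma epi_gap_convex_combination:
  "epi_gap w t ((1 - u) *\<^sub>R p + u *\<^sub>R q) = (1 - u) * epi_gap w t p + u * epi_gap w t q"
  by (simp add: epi_gap_def algebra_simps inner_diff_right inner_add_right)

lemma mem_bW_if_epi_gap_eq_0:
  assumes "nonneg_vec w" and "t \<in> bT tail head orig dst c w" and "p \<in> epi" and "epi_gap w t p = 0"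
  shows "fst p \<in> bW tail head orig dst c t"
proof -
  have "nonneg_vec (fst p)" "opt_cost (fst p) \<le> snd p"
    using assms(3) epi_g_iff[of "fst p" "snd p"] by simp_all
  with assms(4) show ?thesis
    by (simp add: mem_bW_iff[OF assms(1,2)] epi_gap_def inner_diff_right)
qed

lemma extreme_point_if_bW_bT_singleton:
  assumes w: "nonneg_vec w"
    and W: "bW_set tail head orig dst c (bT tail head orig dst c w) = {w}"
  shows "(w, opt_cost w) extreme_point_of epi"
proof -
  obtain t0 where t0: "t0 \<in> bT tail head orig dst c w"
    using bT_nonempty[OF w] by blast
  have gap_zero: "p = (w, opt_cost w)"
    if "p \<in> epi" and "\<forall>t\<in>bT tail head orig dst c w. epi_gap w t p = 0" for p
  proof -
    have "fst p \<in> bW_set tail head orig dst c (bT tail head orig dst c w)"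
      using mem_bW_if_epi_gap_eq_0[OF w _ that(1)] that(2) by (simp add: bW_set_def)
    with W have "fst p = w"
      by simp
    moreover have "snd p = opt_cost w"
      using that(2)[rule_format, OF t0] \<open>fst p = w\<close> by (simp add: epi_gap_def)
    ultimately show ?thesis
      by (simp add: prod_eq_iff)
  qed
  show ?thesis
    unfolding extreme_point_of_def
  proof (intro conjI ballI notI)
    show "(w, opt_cost w) \<in> epi"
      using w by (simp add: epi_g_iff)
  next
    fix p q assume pq: "p \<in> epi" "q \<in> epi" and "(w, opt_cost w) \<in> open_segment p q"
    then obtain u where "p \<noteq> q" "0 < u" "u < 1" and mid: "(w, opt_cost w) = (1 - u) *\<^sub>R p + u *\<^sub>R q"
      by (auto simp: in_segment)
    have "epi_gap w t p = 0 \<and> epi_gap w t q = 0" if "t \<in> bT tail head orig dst c w" for t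
    proof -
      have "(1 - u) * epi_gap w t p + u * epi_gap w t q = epi_gap w t (w, opt_cost w)"
        by (simp only: mid epi_gap_convex_combination)
      also have "\<dots> = 0"
        by (simp add: epi_gap_def)
      finally have "(1 - u) * epi_gap w t p + u * epi_gap w t q = 0" .
      moreover have "0 \<le> (1 - u) * epi_gap w t p" "0 \<le> u * epi_gap w t q"
        using epi_gap_nonneg[OF w that] pq \<open>0 < u\<close> \<open>u < 1\<close> by simp_all
      ultimately have "(1 - u) * epi_gap w t p = 0" "u * epi_gap w t q = 0"
        by linarith+
      with \<open>0 < u\<close> \<open>u < 1\<close> show ?thesis
        by simp
    qed
    then have "p = (w, opt_cost w)" "q = (w, opt_cost w)"
      using gap_zero[OF pq(1)] gap_zero[OF pq(2)] by blast+
    with \<open>p \<noteq> q\<close> show False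
      by simp
  qed
qed

lemma aff_dim_bT_if_extreme_point:
  assumes w: "nonneg_vec w" and ext: "(w, opt_cost w) extreme_point_of epi"
  shows "aff_dim (bT tail head orig dst c w) = int CARD('k)"
proof (rule ccontr)
  assume "aff_dim (bT tail head orig dst c w) \<noteq> int CARD('k)"
  with aff_dim_le_DIM[of "bT tail head orig dst c w"]
  have "aff_dim (bT tail head orig dst c w) < int DIM(real^'k)"
    by simp
  then obtain a \<beta> where a: "a \<noteq> 0" "bT tail head orig dst c w \<subseteq> {t. a \<bullet> t = \<beta>}"
    by (rule aff_lowdim_subset_hyperplane)
  then have "\<forall>t\<in>bT tail head orig dst c w. a \<bullet> t = \<beta>" "\<forall>t\<in>bT tail head orig dst c w. (- a) \<bullet> t = - \<beta>"
    by auto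
  obtain s1 where "0 < s1" "(w + s1 *\<^sub>R a, opt_cost w - \<beta> * s1) \<in> epi"
    using epi_step_along_hyperplane[OF w \<open>\<forall>t\<in>_. a \<bullet> t = \<beta>\<close>] .
  moreover obtain s2 where "0 < s2" "(w + s2 *\<^sub>R - a, opt_cost w - - \<beta> * s2) \<in> epi"
    using epi_step_along_hyperplane[OF w \<open>\<forall>t\<in>_. (- a) \<bullet> t = - \<beta>\<close>] .
  ultimately have "(w + s1 *\<^sub>R a, opt_cost w - \<beta> * s1) \<in> epi" "(w - s2 *\<^sub>R a, opt_cost w + \<beta> * s2) \<in> epi"
    by simp_all
  with in_open_segment_along_line[OF \<open>0 < s1\<close> \<open>0 < s2\<close> a(1)] ext show False
    unfolding extreme_point_of_def by blast
qed

lemma bW_bT_singleton_if_aff_dim: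
  assumes w: "nonneg_vec w" and dim: "aff_dim (bT tail head orig dst c w) = int CARD('k)"
  shows "bW_set tail head orig dst c (bT tail head orig dst c w) = {w}"
proof -
  have "w' = w" if w': "w' \<in> bW_set tail head orig dst c (bT tail head orig dst c w)" for w'
  proof (rule ccontr)
    assume "w' \<noteq> w"
    obtain t0 where "t0 \<in> bT tail head orig dst c w"
      using bT_nonempty[OF w] by blast
    with w' have "nonneg_vec w'"
      by (auto simp: bW_set_def mem_bW_iff[OF w])
    have "bT tail head orig dst c w \<subseteq> {t. (w' - w) \<bullet> t = opt_cost w - opt_cost w'}"
    proof
      fix t assume t: "t \<in> bT tail head orig dst c w"
      with w' have "opt_cost w' + t \<bullet> w' \<le> opt_cost w + t \<bullet> w"
        by (auto simp: bW_set_def mem_bW_iff[OF w])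
      with opt_cost_subgradient[OF w t \<open>nonneg_vec w'\<close>]
      show "t \<in> {t. (w' - w) \<bullet> t = opt_cost w - opt_cost w'}"
        by (simp add: inner_diff_right inner_diff_left inner_commute)
    qed
    then have "aff_dim (bT tail head orig dst c w) \<le> aff_dim {t. (w' - w) \<bullet> t = opt_cost w - opt_cost w'}"
      by (rule aff_dim_subset)
    also have "\<dots> = int CARD('k) - 1"
      using \<open>w' \<noteq> w\<close> by simp
    finally show False
      using dim by simp
  qed
  moreover have "w \<in> bW_set tail head orig dst c (bT tail head orig dst c w)"
    using w by (auto simp: bW_set_def mem_bW_iff)
  ultimately show ?thesis by blast
qed

end

theorem lemma4:
  fixes tail head :: "'k::finite + 'f::finite \<Rightarrow> 'v::finite"
    and c :: "'k + 'f \<Rightarrow> real"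
    and orig dst :: 'v
    and w :: "real^'k"
  assumes no_loops: "\<forall>e. tail e \<noteq> head e"
    and c_nonneg: "\<forall>e. 0 \<le> c e"
    and od_distinct: "orig \<noteq> dst"
    and toll_free_path: "(orig, dst) \<in> {(tail (Inr a), head (Inr a)) | a. True}\<^sup>*"
    and w_nonneg: "nonneg_vec w"
  shows "(strongly_bilevel_feasible tail head orig dst c w \<longleftrightarrow> reaction_set tail head orig dst c {w})
       \<and> (reaction_set tail head orig dst c {w} \<longleftrightarrow>
            bW_set tail head orig dst c (bT tail head orig dst c w) = {w})
       \<and> (bW_set tail head orig dst c (bT tail head orig dst c w) = {w} \<longleftrightarrow>
            (\<exists>z. gval tail head orig dst c w = ereal z \<and>
                 (w, z) extreme_point_of epi_g tail head orig dst c))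
       \<and> ((\<exists>z. gval tail head orig dst c w = ereal z \<and>
                 (w, z) extreme_point_of epi_g tail head orig dst c) \<longleftrightarrow>
            aff_dim (bT tail head orig dst c w) = int CARD('k))"
proof -
  interpret toll_network tail head c orig dst
    using c_nonneg od_distinct toll_free_path by unfold_locales
  have "(\<exists>z. gval tail head orig dst c w = ereal z \<and> (w, z) extreme_point_of epi)
      \<longleftrightarrow> (w, opt_cost w) extreme_point_of epi"
    using gval_eq_opt_cost[OF w_nonneg] by auto
  then show ?thesis
    using w_nonneg reaction_set_singleton_iff[OF w_nonneg]
      extreme_point_if_bW_bT_singleton[OF w_nonneg] aff_dim_bT_if_extreme_point[OF w_nonneg]
      bW_bT_singleton_if_aff_dim[OF w_nonneg]
    unfolding strongly_bilevel_feasible_def by blast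
qed

end
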